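(* Let $q\ge2$ and $r\in\{0,1,\dots,q-1\}$ be integers and let $p>q+r$ be an integer. Let $A=\{d\in\{0,1,\dots,p-1\}: d\equiv r \pmod q\}$, $s=\#A$ (so $s\ge 2$ and $h(i)=qi+r$ for $0\le i\le s-1$). Then \[ m=\inf_{n\ge1}b_n=\frac{q(s-1)+r}{p-1},\qquad M=\sup_{n\ge1}b_n=\frac{q(p-1)+pr}{p-1}. \]
   Context: For integers $p> s\ge 2$ and $A\subset\{0,\dots,p-1\}$ with $\#A=s$, let $h:\{0,\dots,s-1\}\to A$ be the strictly increasing bijection. For a positive integer $n$ with base-$s$ expansion $n=\sum_{i=0}^k\varepsilon_i s^i$ ($\varepsilon_k\ne0$), put $a_n=\sum_{i=0}^k h(\varepsilon_i)p^i$ and $b_n=a_n/n^{\log_s p}$. *)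

theory Defs
  imports Complex_Main
begin

fun base_digits :: "nat \<Rightarrow> nat \<Rightarrow> nat list" where
  "base_digits s n = (if n = 0 \<or> s < 2 then [] else n mod s # base_digits s (n div s))"

declare base_digits.simps[simp del]

definition digit_map :: "nat set \<Rightarrow> nat \<Rightarrow> nat" where
  "digit_map A i = sorted_list_of_set A ! i"

definition a_seq :: "nat \<Rightarrow> nat set \<Rightarrow> nat \<Rightarrow> nat" where
  "a_seq p A n = (let ds = base_digits (card A) n in
      (\<Sum>i<length ds. digit_map A (ds ! i) * p ^ i))"

definition b_seq :: "nat \<Rightarrow> nat set \<Rightarrow> nat \<Rightarrow> real" where
  "b_seq p A n = real (a_seq p A n) / real n powr log (real (card A)) (real p)"

end

theory Submission
  imports Defs "HOL-Analysis.Analysis"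
begin

text \<open>
  Write \<open>\<alpha> = log\<^sub>s p \<ge> 1\<close>, so that \<open>p = s powr \<alpha>\<close>, and let \<open>V\<^sub>b\<close> evaluate a digit list in base \<open>b\<close>.
  Since \<open>h(i) = q i + r\<close>, we have \<open>(p - 1) a\<^sub>n = q (p - 1) V\<^sub>p(\<epsilon>) + r (p\<^sup>L - 1)\<close> for the
  \<open>L\<close> base-\<open>s\<close> digits \<open>\<epsilon>\<close> of \<open>n\<close>, while \<open>V\<^sub>s(\<epsilon>) = n\<close>. Convexity of \<open>x powr \<alpha>\<close> gives
  \<open>(s - 1) n powr \<alpha> \<le> (p - 1) V\<^sub>p(\<epsilon>) \<le> (p - 1) n powr \<alpha>\<close> and \<open>p\<^sup>L\<^sup>-\<^sup>1 \<le> n powr \<alpha> \<le> p\<^sup>L - 1\<close>,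
  which yields the two bounds. They are approached along \<open>n = s\<^sup>k - 1\<close> (all digits \<open>s - 1\<close>)
  and \<open>n = s\<^sup>k\<close> (a single digit \<open>1\<close>) respectively.
\<close>

lemma cINF_eq_limit:
  fixes f :: "'a \<Rightarrow> real"
  assumes lower: "\<And>x. x \<in> S \<Longrightarrow> c \<le> f x"
    and in_S: "eventually (\<lambda>k. g k \<in> S) sequentially"
    and lim: "(\<lambda>k. f (g k)) \<longlonglongrightarrow> c"
  shows "(INF x\<in>S. f x) = c"
proof (rule antisym)
  have bdd: "bdd_below (f ` S)"
    using lower by (intro bdd_belowI2)
  show "(INF x\<in>S. f x) \<le> c"
    using lim by (rule tendsto_lowerbound)
      (use in_S bdd in \<open>auto elim: eventually_mono intro: cINF_lower\<close>)
  have "S \<noteq> {}"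
    using in_S by (auto simp: eventually_sequentially)
  then show "c \<le> (INF x\<in>S. f x)"
    using lower by (rule cINF_greatest)
qed

lemma cSUP_eq_limit:
  fixes f :: "'a \<Rightarrow> real"
  assumes upper: "\<And>x. x \<in> S \<Longrightarrow> f x \<le> c"
    and in_S: "eventually (\<lambda>k. g k \<in> S) sequentially"
    and lim: "(\<lambda>k. f (g k)) \<longlonglongrightarrow> c"
  shows "(SUP x\<in>S. f x) = c"
proof (rule antisym)
  have bdd: "bdd_above (f ` S)"
    using upper by (intro bdd_aboveI2)
  show "c \<le> (SUP x\<in>S. f x)"
    using lim by (rule tendsto_upperbound)
      (use in_S bdd in \<open>auto elim: eventually_mono intro: cSUP_upper\<close>)
  have "S \<noteq> {}"
    using in_S by (auto simp: eventually_sequentially)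
  then show "(SUP x\<in>S. f x) \<le> c"
    using upper by (rule cSUP_least)
qed

lemma power_powr: "(x ^ n) powr a = (x powr a) ^ n"
  for x a :: real
  by (induction n) (simp_all add: powr_mult)

lemma convex_on_powr_nonneg:
  fixes \<alpha> :: real
  assumes "1 \<le> \<alpha>"
  shows "convex_on {0..} (\<lambda>x. x powr \<alpha>)"
proof (rule convex_on_linorderI)
  fix t x y :: real
  assume t: "0 < t" "t < 1" and xy: "x \<in> {0..}" "y \<in> {0..}" "x < y"
  show "((1 - t) *\<^sub>R x + t *\<^sub>R y) powr \<alpha> \<le> (1 - t) * x powr \<alpha> + t * y powr \<alpha>"
  proof (cases "x = 0")
    case True
    have "t powr \<alpha> \<le> t powr 1"
      using t assms by (intro powr_mono') auto
    then have "t powr \<alpha> * y powr \<alpha> \<le> t * y powr \<alpha>"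
      using t by (intro mult_right_mono) auto
    then show ?thesis
      using True by (simp add: powr_mult)
  next
    case False
    then show ?thesis
      using convex_onD[OF powr_convex[OF assms], of t x y] t xy by simp
  qed
qed simp

lemma convex_on_increasing_differences:
  fixes f :: "real \<Rightarrow> real"
  assumes f: "convex_on I f" and I: "x \<in> I" "y + e \<in> I" and "x \<le> y" "0 \<le> e"
  shows "f (x + e) - f x \<le> f (y + e) - f y"
proof (cases "e = 0")
  case False
  define t where "t = e / (y + e - x)"
  have t: "0 \<le> t" "t \<le> 1" "t * (y + e - x) = e"
    using assms False by (auto simp: t_def field_simps)
  have "(1 - t) * x + t * (y + e) = x + e" "(1 - t) * (y + e) + t * x = y"
    using t(3) by (simp_all add: algebra_simps)
  then have "f (x + e) \<le> (1 - t) * f x + t * f (y + e)" "f y \<le> (1 - t) * f (y + e) + t * f x"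
    using convex_onD[OF f, of t x "y + e"] convex_onD[OF f, of t "y + e" x] t I by simp_all
  then show ?thesis
    by (simp add: algebra_simps)
qed simp

lemma convex_on_chord_above:
  fixes f :: "real \<Rightarrow> real"
  assumes f: "convex_on I f" and I: "a \<in> I" "b \<in> I" and "a \<le> x" "x \<le> b"
  shows "(f x - f a) * (b - a) \<le> (x - a) * (f b - f a)"
proof (cases "a = b")
  case False
  define t where "t = (x - a) / (b - a)"
  have t: "0 \<le> t" "t \<le> 1" "t * (b - a) = x - a"
    using assms False by (auto simp: t_def field_simps)
  have "(1 - t) * a + t * b = x"
    using t(3) by (simp add: algebra_simps)
  then have "f x \<le> (1 - t) * f a + t * f b"
    using convex_onD[OF f, of t a b] t I by simp
  then have "(f x - f a) * (b - a) \<le> t * (f b - f a) * (b - a)"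
    using assms by (intro mult_right_mono) (auto simp: algebra_simps)
  also have "\<dots> = (x - a) * (f b - f a)"
    using t(3) by (metis mult.assoc mult.commute)
  finally show ?thesis .
qed (use assms in simp)

lemma powr_superadditive:
  fixes a b \<alpha> :: real
  assumes "0 \<le> a" "0 \<le> b" "1 \<le> \<alpha>"
  shows "a powr \<alpha> + b powr \<alpha> \<le> (a + b) powr \<alpha>"
  using convex_on_increasing_differences[OF convex_on_powr_nonneg[OF assms(3)], of 0 a b] assms
  by (simp add: add.commute)

text \<open>Here \<open>e\<close> is a new leading digit and \<open>y\<close> the value of the lower digits relative to
  the place value of \<open>e\<close>.\<close>

lemma powr_leading_digit_bound:
  fixes s e y \<alpha> :: real
  assumes "1 < s" "0 \<le> e" "e \<le> s - 1" "0 \<le> y" "y \<le> 1" "1 \<le> \<alpha>"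
  shows "(s - 1) * (e + y) powr \<alpha> \<le> e * (s powr \<alpha> - 1) + (s - 1) * y powr \<alpha>"
proof -
  note cvx = convex_on_powr_nonneg[OF \<open>1 \<le> \<alpha>\<close>]
  have "(y + e) powr \<alpha> - y powr \<alpha> \<le> (1 + e) powr \<alpha> - 1 powr \<alpha>"
    using convex_on_increasing_differences[OF cvx, of y 1 e] assms by simp
  then have "(s - 1) * ((e + y) powr \<alpha> - y powr \<alpha>) \<le> ((1 + e) powr \<alpha> - 1) * (s - 1)"
    using assms by (simp add: add.commute mult.commute mult_left_mono)
  also have "\<dots> \<le> e * (s powr \<alpha> - 1)"
    using convex_on_chord_above[OF cvx, of 1 s "1 + e"] assms by simp
  finally show ?thesis
    by (simp add: algebra_simps)
qed

lemma base_digits_Cons: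
  "2 \<le> s \<Longrightarrow> n \<noteq> 0 \<Longrightarrow> base_digits s n = n mod s # base_digits s (n div s)"
  by (subst base_digits.simps) auto

lemma base_digits_0 [simp]: "base_digits s 0 = []"
  by (subst base_digits.simps) auto

lemma base_digits_less: "2 \<le> s \<Longrightarrow> d \<in> set (base_digits s n) \<Longrightarrow> d < s"
proof (induction s n rule: base_digits.induct)
  case (1 s n)
  then show ?case
    by (cases "n = 0") (auto simp: base_digits_Cons)
qed

lemma base_digits_power: "2 \<le> s \<Longrightarrow> base_digits s (s ^ k) = replicate k 0 @ [1]"
  by (induction k) (simp_all add: base_digits_Cons)

lemma base_digits_power_minus_1:
  assumes "2 \<le> s"
  shows "base_digits s (s ^ k - 1) = replicate k (s - 1)"
proof (induction k)
  case (Suc k)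
  have split: "s ^ Suc k - 1 = (s ^ k - 1) * s + (s - 1)"
    using assms by (simp add: algebra_simps diff_mult_distrib)
  have "(s ^ Suc k - 1) mod s = s - 1" "(s ^ Suc k - 1) div s = s ^ k - 1"
    unfolding split using assms by (simp_all only: mod_mult_self3 div_mult_self3) simp_all
  moreover have "2 \<le> s ^ Suc k"
    using assms mult_le_mono[OF assms, of 1 "s ^ k"] by simp
  ultimately show ?case
    using assms Suc.IH by (simp add: base_digits_Cons)
qed simp

lemma base_digits_length_lower:
  "2 \<le> s \<Longrightarrow> n \<noteq> 0 \<Longrightarrow> s ^ (length (base_digits s n) - 1) \<le> n"
proof (induction s n rule: base_digits.induct)
  case (1 s n)
  show ?case
  proof (cases "n div s = 0")
    case False
    let ?ds = "base_digits s (n div s)"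
    have "base_digits s n = n mod s # ?ds" "?ds \<noteq> []"
      using 1 False by (simp_all add: base_digits_Cons)
    then have "s ^ (length (base_digits s n) - 1) = s * s ^ (length ?ds - 1)"
      by (cases ?ds) auto
    also have "\<dots> \<le> s * (n div s)"
      using 1 False by simp
    also have "\<dots> \<le> n"
      by simp
    finally show ?thesis .
  qed (use 1 in \<open>simp add: base_digits_Cons\<close>)
qed

definition digits_value :: "real \<Rightarrow> nat list \<Rightarrow> real" where
  "digits_value b ds = (\<Sum>i<length ds. real (ds ! i) * b ^ i)"

lemma digits_value_Nil [simp]: "digits_value b [] = 0"
  by (simp add: digits_value_def)

lemma digits_value_Cons: "digits_value b (d # ds) = real d + b * digits_value b ds"
  unfolding digits_value_def
  by (simp del: sum.lessThan_Suc add: sum.lessThan_Suc_shift sum_distrib_left mult_ac)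

lemma digits_value_snoc: "digits_value b (ds @ [d]) = digits_value b ds + real d * b ^ length ds"
  by (simp add: digits_value_def nth_append)

lemma digits_value_replicate: "digits_value b (replicate k d) = real d * (\<Sum>i<k. b ^ i)"
  by (simp add: digits_value_def sum_distrib_left)

lemma digits_value_affine:
  "digits_value b (map (\<lambda>d. q * d + r) ds) = real q * digits_value b ds + real r * (\<Sum>i<length ds. b ^ i)"
  by (simp add: digits_value_def sum_distrib_left sum.distrib distrib_right mult.assoc)

lemma digits_value_nonneg: "0 \<le> b \<Longrightarrow> 0 \<le> digits_value b ds"
  by (simp add: digits_value_def sum_nonneg)

lemma digits_value_base_digits: "2 \<le> s \<Longrightarrow> digits_value (real s) (base_digits s n) = real n"
proof (induction s n rule: base_digits.induct)
  case (1 s n)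
  show ?case
  proof (cases "n = 0")
    case False
    with 1 have "digits_value (real s) (base_digits s n) = real (n mod s) + real s * real (n div s)"
      by (simp add: base_digits_Cons digits_value_Cons)
    also have "\<dots> = real n"
      by (metis mod_mult_div_eq of_nat_add of_nat_mult)
    finally show ?thesis .
  qed simp
qed

lemma digits_value_less_power:
  fixes s :: nat
  assumes "\<forall>d\<in>set ds. d < s"
  shows "digits_value (real s) ds + 1 \<le> real s ^ length ds"
  using assms
proof (induction ds rule: rev_induct)
  case (snoc d ds)
  then have "digits_value (real s) ds + 1 \<le> real s ^ length ds" and "real d + 1 \<le> real s"
    by auto
  then have "digits_value (real s) ds + 1 + real d * real s ^ length ds \<le> (real d + 1) * real s ^ length ds"
    by (simp add: algebra_simps)
  also have "\<dots> \<le> real s * real s ^ length ds"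
    using \<open>real d + 1 \<le> real s\<close> by (intro mult_right_mono) auto
  finally show ?case
    by (simp add: digits_value_snoc)
qed simp

lemma digits_value_powr_le:
  fixes b \<alpha> :: real
  assumes "0 \<le> b" "1 \<le> \<alpha>"
  shows "digits_value (b powr \<alpha>) ds \<le> digits_value b ds powr \<alpha>"
proof (induction ds)
  case (Cons d ds)
  define m where "m = digits_value b ds"
  have m: "0 \<le> m"
    using assms by (simp add: m_def digits_value_nonneg)
  have "real d \<le> real d powr \<alpha>"
    using assms powr_mono[of 1 \<alpha> "real d"] by (cases "d = 0") auto
  moreover have "b powr \<alpha> * digits_value (b powr \<alpha>) ds \<le> (b * m) powr \<alpha>"
    using Cons by (simp add: m_def powr_mult mult_left_mono)
  ultimately have "digits_value (b powr \<alpha>) (d # ds) \<le> real d powr \<alpha> + (b * m) powr \<alpha>"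
    by (simp add: digits_value_Cons)
  also have "\<dots> \<le> (real d + b * m) powr \<alpha>"
    using assms m by (intro powr_superadditive) auto
  finally show ?case
    by (simp add: digits_value_Cons m_def)
qed simp

lemma digits_value_powr_ge:
  fixes s :: nat and \<alpha> :: real
  assumes "2 \<le> s" "1 \<le> \<alpha>" "\<forall>d\<in>set ds. d < s"
  shows "(real s - 1) * digits_value (real s) ds powr \<alpha>
    \<le> (real s powr \<alpha> - 1) * digits_value (real s powr \<alpha>) ds"
  using assms(3)
proof (induction ds rule: rev_induct)
  case (snoc e ds)
  define P where "P = real s powr \<alpha>"
  define m where "m = digits_value (real s) ds"
  define t where "t = real s ^ length ds"
  define y where "y = m / t"
  have t: "0 < t" "t powr \<alpha> = P ^ length ds"
    using assms by (simp_all add: t_def P_def power_powr)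
  have "0 \<le> m" "m + 1 \<le> t"
    using snoc.prems digits_value_less_power[of ds s]
    by (simp_all add: m_def t_def digits_value_nonneg)
  then have y: "0 \<le> y" "y \<le> 1" "m = t * y"
    using t by (simp_all add: y_def field_simps)
  have e: "real e \<le> real s - 1"
    using snoc.prems by (simp add: of_nat_diff[symmetric] less_imp_le_nat Suc_le_eq)
  have "m + real e * t = t * (real e + y)"
    using y(3) by (simp add: algebra_simps)
  then have "(real s - 1) * digits_value (real s) (ds @ [e]) powr \<alpha>
      = t powr \<alpha> * ((real s - 1) * (real e + y) powr \<alpha>)"
    by (simp add: digits_value_snoc m_def t_def powr_mult)
  also have "\<dots> \<le> t powr \<alpha> * (real e * (P - 1) + (real s - 1) * y powr \<alpha>)"
    using assms y e unfolding P_def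
    by (intro mult_left_mono powr_leading_digit_bound) auto
  also have "\<dots> = real e * (P - 1) * t powr \<alpha> + (real s - 1) * m powr \<alpha>"
    using y(3) by (simp add: powr_mult algebra_simps)
  also have "\<dots> \<le> real e * (P - 1) * t powr \<alpha> + (P - 1) * digits_value P ds"
    using snoc.IH snoc.prems by (simp add: m_def P_def)
  also have "\<dots> = (P - 1) * digits_value P (ds @ [e])"
    by (simp add: digits_value_snoc t(2) algebra_simps)
  finally show ?case
    by (simp add: P_def)
qed simp

lemma sorted_list_of_set_image_strict_mono:
  fixes f :: "nat \<Rightarrow> 'a::linorder"
  assumes "strict_mono f"
  shows "sorted_list_of_set (f ` {..<N}) = map f [0..<N]"
proof (rule sorted_list_of_set_unique[THEN iffD1])
  show "sorted_wrt (<) (map f [0..<N]) \<and> set (map f [0..<N]) = f ` {..<N}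
      \<and> length (map f [0..<N]) = card (f ` {..<N})"
    using assms by (auto simp: sorted_wrt_iff_nth_less strict_mono_less card_image
        strict_mono_imp_inj_on atLeast0LessThan)
qed auto

lemma digit_map_image_strict_mono:
  fixes f :: "nat \<Rightarrow> nat"
  assumes "strict_mono f" "i < card (f ` {..<N})"
  shows "digit_map (f ` {..<N}) i = f i"
  using assms by (simp add: digit_map_def sorted_list_of_set_image_strict_mono card_image strict_mono_imp_inj_on)

lemma residue_class_eq_image:
  fixes p q r :: nat
  assumes "r < q"
  shows "{d. d < p \<and> d mod q = r} = (\<lambda>i. q * i + r) ` {..<(p + q - Suc r) div q}"
proof -
  have bound: "q * i + r < p \<longleftrightarrow> i < (p + q - Suc r) div q" for i
  proof -
    have "i < (p + q - Suc r) div q \<longleftrightarrow> Suc i * q \<le> p + q - Suc r"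
      using assms less_eq_div_iff_mult_less_eq[of q "Suc i" "p + q - Suc r"] by (simp add: Suc_le_eq)
    then show ?thesis
      using assms by (simp add: algebra_simps, arith)
  qed
  show ?thesis
  proof (intro set_eqI iffI)
    fix d assume "d \<in> {d. d < p \<and> d mod q = r}"
    then have "d = q * (d div q) + r" "d div q < (p + q - Suc r) div q"
      using bound[of "d div q"] by (auto simp: mult_div_mod_eq)
    then show "d \<in> (\<lambda>i. q * i + r) ` {..<(p + q - Suc r) div q}"
      by blast
  next
    fix d assume "d \<in> (\<lambda>i. q * i + r) ` {..<(p + q - Suc r) div q}"
    then obtain i where "i < (p + q - Suc r) div q" "d = q * i + r"
      by blast
    then show "d \<in> {d. d < p \<and> d mod q = r}"
      using assms bound[of i] by simp
  qed
qed

locale arithmetic_digit_set =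
  fixes p q r :: nat and A :: "nat set"
  assumes two_le_card: "2 \<le> card A"
    and card_le: "card A \<le> p"
    and digit_map_eq: "\<And>i. i < card A \<Longrightarrow> digit_map A i = q * i + r"
begin

abbreviation s :: nat where "s \<equiv> card A"

abbreviation \<alpha> :: real where "\<alpha> \<equiv> log (real s) (real p)"

lemma one_le_\<alpha>: "1 \<le> \<alpha>"
  using two_le_card card_le by (simp add: le_log_iff)

lemma s_powr_\<alpha>: "real s powr \<alpha> = real p"
  using two_le_card card_le by simp

lemma p_gt_1: "1 < real p"
  using two_le_card card_le by simp

lemma a_seq_eq:
  fixes n :: nat
  defines "ds \<equiv> base_digits s n"
  shows "(real p - 1) * real (a_seq p A n)
    = real q * ((real p - 1) * digits_value p ds) + real r * (real p ^ length ds - 1)"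
proof -
  have "digit_map A (ds ! i) = q * ds ! i + r" if "i < length ds" for i
    using base_digits_less[OF two_le_card nth_mem[OF that[unfolded ds_def]]] digit_map_eq
    by (simp add: ds_def)
  then have "a_seq p A n = (\<Sum>i<length ds. (q * ds ! i + r) * p ^ i)"
    unfolding a_seq_def Let_def ds_def[symmetric] by (intro sum.cong) auto
  then have "real (a_seq p A n) = digits_value p (map (\<lambda>d. q * d + r) ds)"
    by (simp add: digits_value_def)
  also have "\<dots> = real q * digits_value p ds + real r * (\<Sum>i<length ds. real p ^ i)"
    by (rule digits_value_affine)
  finally show ?thesis
    by (simp add: power_diff_1_eq algebra_simps)
qed

lemma base_digits_less_value:
  "\<forall>d\<in>set (base_digits s n). d < s" "digits_value s (base_digits s n) = real n"
  using base_digits_less[OF two_le_card] digits_value_base_digits[OF two_le_card] by auto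

lemma b_seq_ge:
  assumes "1 \<le> n"
  shows "(real q * (real s - 1) + real r) / (real p - 1) \<le> b_seq p A n"
proof -
  define ds where "ds = base_digits s n"
  define N where "N = real n powr \<alpha>"
  note digits = base_digits_less_value[of n, folded ds_def]
  have "(real s - 1) * N \<le> (real p - 1) * digits_value p ds"
    using digits_value_powr_ge[OF two_le_card one_le_\<alpha> digits(1)] by (simp add: digits(2) s_powr_\<alpha> N_def)
  moreover have "N + 1 \<le> real p ^ length ds"
  proof -
    have "N + 1 \<le> (real n + 1) powr \<alpha>"
      using powr_superadditive[of "real n" 1 \<alpha>] one_le_\<alpha> by (simp add: N_def)
    also have "\<dots> \<le> (real s ^ length ds) powr \<alpha>"
      using digits_value_less_power[OF digits(1)] digits(2) one_le_\<alpha> by (intro powr_mono2) auto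
    also have "\<dots> = real p ^ length ds"
      by (simp add: power_powr s_powr_\<alpha>)
    finally show ?thesis .
  qed
  ultimately have "(real q * (real s - 1) + real r) * N
      \<le> real q * ((real p - 1) * digits_value p ds) + real r * (real p ^ length ds - 1)"
    unfolding distrib_right mult.assoc by (intro add_mono mult_left_mono) auto
  also have "\<dots> = (real p - 1) * real (a_seq p A n)"
    by (simp add: a_seq_eq ds_def)
  finally show ?thesis
    using assms p_gt_1 by (simp add: b_seq_def N_def field_simps)
qed

lemma b_seq_le:
  assumes "1 \<le> n"
  shows "b_seq p A n \<le> (real q * (real p - 1) + real p * real r) / (real p - 1)"
proof -
  define ds where "ds = base_digits s n"
  define N where "N = real n powr \<alpha>"
  note digits = base_digits_less_value[of n, folded ds_def]
  have "digits_value p ds \<le> N"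
    using digits_value_powr_le[of "real s" \<alpha> ds] one_le_\<alpha> by (simp add: digits(2) s_powr_\<alpha> N_def)
  moreover have "real p ^ length ds - 1 \<le> real p * N"
  proof -
    have "ds \<noteq> []"
      using assms two_le_card by (simp add: ds_def base_digits_Cons)
    then have "real p ^ length ds = real p * (real s ^ (length ds - 1)) powr \<alpha>"
      by (cases ds) (simp_all add: power_powr s_powr_\<alpha>)
    also have "\<dots> \<le> real p * N"
      using base_digits_length_lower[OF two_le_card, of n] assms one_le_\<alpha>
      by (auto simp: N_def ds_def intro!: mult_left_mono powr_mono2 simp flip: of_nat_power)
    finally show ?thesis
      by simp
  qed
  ultimately have "(real p - 1) * real (a_seq p A n) \<le> real q * ((real p - 1) * N) + real r * (real p * N)"
    unfolding a_seq_eq[of n, folded ds_def] using p_gt_1 by (intro add_mono mult_left_mono) auto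
  also have "\<dots> = (real q * (real p - 1) + real p * real r) * N"
    by (simp add: algebra_simps)
  finally show ?thesis
    using assms p_gt_1 by (simp add: b_seq_def N_def field_simps)
qed

lemma b_seq_power_minus_1:
  assumes "0 < k"
  shows "b_seq p A (s ^ k - 1) = (real q * (real s - 1) + real r) / (real p - 1)
    * (1 - (1 / real p) ^ k) / (1 - (1 / real s) ^ k) powr \<alpha>"
proof -
  define X where "X = (1 - 1 / real s ^ k) powr \<alpha>"
  have "1 < real s ^ k"
    using assms two_le_card by (simp add: one_less_power)
  then have X: "0 < X"
    by (simp add: X_def)
  have digits: "(real p - 1) * digits_value p (replicate k (s - 1)) = (real s - 1) * (real p ^ k - 1)"
    using two_le_card by (simp add: digits_value_replicate power_diff_1_eq of_nat_diff)
  have a: "(real p - 1) * real (a_seq p A (s ^ k - 1))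
      = real q * ((real s - 1) * (real p ^ k - 1)) + real r * (real p ^ k - 1)"
    using a_seq_eq[of "s ^ k - 1"]
    unfolding base_digits_power_minus_1[OF two_le_card] length_replicate digits .
  have "real (s ^ k - 1) = real s ^ k * (1 - 1 / real s ^ k)"
    using two_le_card by (simp add: of_nat_diff field_simps)
  then have "real (s ^ k - 1) powr \<alpha> = real p ^ k * X"
    using two_le_card by (simp add: X_def powr_mult power_powr s_powr_\<alpha>)
  then have "b_seq p A (s ^ k - 1)
      = (real p - 1) * real (a_seq p A (s ^ k - 1)) / ((real p - 1) * (real p ^ k * X))"
    using p_gt_1 by (simp add: b_seq_def)
  also have "\<dots> = (real q * (real s - 1) + real r) * (real p ^ k - 1) / ((real p - 1) * (real p ^ k * X))"
    unfolding a by (simp add: algebra_simps)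
  also have "\<dots> = (real q * (real s - 1) + real r) / (real p - 1) * (1 - 1 / real p ^ k) / X"
    using p_gt_1 X by (simp add: field_simps)
  finally show ?thesis
    by (simp add: X_def power_one_over)
qed

lemma b_seq_power:
  "b_seq p A (s ^ k) = (real q * (real p - 1) + real r * (real p - (1 / real p) ^ k)) / (real p - 1)"
proof -
  have a: "(real p - 1) * real (a_seq p A (s ^ k))
      = real q * ((real p - 1) * real p ^ k) + real r * (real p * real p ^ k - 1)"
    using a_seq_eq[of "s ^ k"] two_le_card
    by (simp add: base_digits_power digits_value_snoc digits_value_replicate)
  have "b_seq p A (s ^ k) = (real p - 1) * real (a_seq p A (s ^ k)) / ((real p - 1) * real p ^ k)"
    using p_gt_1 by (simp add: b_seq_def power_powr s_powr_\<alpha>)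
  also have "\<dots> = (real q * (real p - 1) + real r * (real p - 1 / real p ^ k)) / (real p - 1)"
    unfolding a using p_gt_1 by (simp add: field_simps)
  finally show ?thesis
    by (simp add: power_one_over)
qed

lemma INF_b_seq: "(INF n\<in>{1..}. b_seq p A n) = (real q * (real s - 1) + real r) / (real p - 1)"
proof (rule cINF_eq_limit)
  show "eventually (\<lambda>k. s ^ k - 1 \<in> {1..}) sequentially"
    using two_le_card
    by (intro eventually_sequentiallyI[of 1]) (simp add: Suc_le_eq le_less_trans[OF _ power_strict_increasing])
  have "(\<lambda>k. (real q * (real s - 1) + real r) / (real p - 1) * (1 - (1 / real p) ^ k)
        / (1 - (1 / real s) ^ k) powr \<alpha>)
      \<longlonglongrightarrow> (real q * (real s - 1) + real r) / (real p - 1) * (1 - 0) / (1 - 0) powr \<alpha>"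
    using two_le_card p_gt_1 by (intro tendsto_intros LIMSEQ_power_zero) auto
  moreover have "eventually (\<lambda>k. (real q * (real s - 1) + real r) / (real p - 1) * (1 - (1 / real p) ^ k)
      / (1 - (1 / real s) ^ k) powr \<alpha> = b_seq p A (s ^ k - 1)) sequentially"
    using eventually_gt_at_top[of "0::nat"] by eventually_elim (rule b_seq_power_minus_1[symmetric])
  ultimately show "(\<lambda>k. b_seq p A (s ^ k - 1)) \<longlonglongrightarrow> (real q * (real s - 1) + real r) / (real p - 1)"
    by (simp add: tendsto_cong)
qed (use b_seq_ge in auto)

lemma SUP_b_seq: "(SUP n\<in>{1..}. b_seq p A n) = (real q * (real p - 1) + real p * real r) / (real p - 1)"
proof (rule cSUP_eq_limit)
  show "eventually (\<lambda>k. s ^ k \<in> {1..}) sequentially"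
    using two_le_card by simp
  have "(\<lambda>k. (real q * (real p - 1) + real r * (real p - (1 / real p) ^ k)) / (real p - 1))
      \<longlonglongrightarrow> (real q * (real p - 1) + real r * (real p - 0)) / (real p - 1)"
    using p_gt_1 by (intro tendsto_intros LIMSEQ_power_zero) auto
  then show "(\<lambda>k. b_seq p A (s ^ k)) \<longlonglongrightarrow> (real q * (real p - 1) + real p * real r) / (real p - 1)"
    by (simp add: b_seq_power mult.commute)
qed (use b_seq_le in auto)

end

lemma arithmetic_digit_set_residue_class:
  fixes p q r :: nat
  assumes "r < q" "q + r < p"
  shows "arithmetic_digit_set p q r {d. d < p \<and> d mod q = r}"
proof
  let ?A = "{d. d < p \<and> d mod q = r}"
  have "{r, q + r} \<subseteq> ?A" "finite ?A"
    using assms by auto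
  then show "2 \<le> card ?A"
    using assms card_mono[of ?A "{r, q + r}"] by simp
  show "card ?A \<le> p"
    using card_mono[of "{..<p}" ?A] by auto
  have "strict_mono (\<lambda>i. q * i + r)"
    using assms by (intro strict_monoI) simp
  then show "digit_map ?A i = q * i + r" if "i < card ?A" for i
    using that digit_map_image_strict_mono unfolding residue_class_eq_image[OF \<open>r < q\<close>] by blast
qed

theorem theorem5:
  fixes q r p :: nat and A :: "nat set"
  assumes "q \<ge> 2" and "r < q" and "p > q + r"
    and "A = {d. d < p \<and> d mod q = r}"
  shows "(INF n\<in>{1..}. b_seq p A n) = (real q * (real (card A) - 1) + real r) / (real p - 1) \<and>
         (SUP n\<in>{1..}. b_seq p A n) = (real q * (real p - 1) + real p * real r) / (real p - 1)"
proof -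
  interpret arithmetic_digit_set p q r A
    using arithmetic_digit_set_residue_class assms by simp
  show ?thesis
    using INF_b_seq SUP_b_seq by simp
qed

end
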